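(* Let $\mathscr{H}$ be a complex Hilbert space, $N(\cdot)$ a norm on $\mathbb{B}(\mathscr{H})$, and $T\in\mathbb{B}(\mathscr{H})$. Then $$\frac12\max\{w_N(T+T^* ),w_N(T-T^* )\}\leq w_N(T)\leq\frac12\sqrt{w_N^2(T+T^* )+w_N^2(T-T^* )}.$$
   Context: For $T\in\mathbb{B}(\mathscr{H})$: $\Re(T)=\frac12(T+T^* )$ and $w_N(T)=\sup_{\theta\in\mathbb{R}}N(\Re(e^{i\theta}T))$. *)

theory Defs
  imports "HOL-Analysis.Analysis"
begin

text \<open>HOL-Analysis only provides real inner product spaces, so we introduce complex
ones.  The inner product is linear in the second argument and conjugate-linear in the
first; the (real) norm of the underlying normed space is the one induced by it.\<close>

class complex_inner = real_normed_vector +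
  fixes scaleC :: "complex \<Rightarrow> 'a \<Rightarrow> 'a"
  fixes cinner :: "'a \<Rightarrow> 'a \<Rightarrow> complex"
  assumes scaleC_add_right: "scaleC a (x + y) = scaleC a x + scaleC a y"
    and scaleC_add_left: "scaleC (a + b) x = scaleC a x + scaleC b x"
    and scaleC_scaleC: "scaleC a (scaleC b x) = scaleC (a * b) x"
    and scaleC_one: "scaleC 1 x = x"
    and scaleC_of_real: "scaleC (complex_of_real r) x = r *\<^sub>R x"
    and cinner_conj: "cinner x y = cnj (cinner y x)"
    and cinner_add_right: "cinner x (y + z) = cinner x y + cinner x z"
    and cinner_scaleC_right: "cinner x (scaleC a y) = a * cinner x y"
    and cinner_self_norm: "cinner x x = complex_of_real ((norm x)\<^sup>2)"

class complex_hilbert = complex_inner + complete_space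

text \<open>Consistency check: the complex numbers form a complex Hilbert space.\<close>

instantiation complex :: complex_inner
begin
definition scaleC_complex :: "complex \<Rightarrow> complex \<Rightarrow> complex" where
  "scaleC_complex a x = a * x"
definition cinner_complex :: "complex \<Rightarrow> complex \<Rightarrow> complex" where
  "cinner_complex x y = cnj x * y"
instance
proof
  fix a b :: complex and x y z :: complex and r :: real
  show "scaleC a (x + y) = scaleC a x + scaleC a y" by (simp add: scaleC_complex_def distrib_left)
  show "scaleC (a + b) x = scaleC a x + scaleC b x" by (simp add: scaleC_complex_def distrib_right)
  show "scaleC a (scaleC b x) = scaleC (a * b) x" by (simp add: scaleC_complex_def mult.assoc)
  show "scaleC 1 x = x" by (simp add: scaleC_complex_def)
  show "scaleC (complex_of_real r) x = r *\<^sub>R x" by (simp add: scaleC_complex_def scaleR_conv_of_real)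
  show "cinner x y = cnj (cinner y x)" by (simp add: cinner_complex_def mult.commute)
  show "cinner x (y + z) = cinner x y + cinner x z" by (simp add: cinner_complex_def distrib_left)
  show "cinner x (scaleC a y) = a * cinner x y" by (simp add: cinner_complex_def scaleC_complex_def mult.left_commute)
  show "cinner x x = complex_of_real ((norm x)\<^sup>2)" by (simp add: cinner_complex_def complex_norm_square mult.commute del: of_real_power)
qed
end

instance complex :: complex_hilbert ..

definition bounded_op :: "('a::complex_inner \<Rightarrow> 'a) \<Rightarrow> bool" where
  "bounded_op T \<longleftrightarrow> bounded_linear T \<and> (\<forall>c x. T (scaleC c x) = scaleC c (T x))"

definition adj :: "('a::complex_inner \<Rightarrow> 'a) \<Rightarrow> ('a \<Rightarrow> 'a)" where
  "adj T = (THE S. \<forall>x y. cinner (T x) y = cinner x (S y))"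

definition re_op :: "('a::complex_inner \<Rightarrow> 'a) \<Rightarrow> ('a \<Rightarrow> 'a)" where
  "re_op T = (\<lambda>x. scaleC (1/2) (T x + adj T x))"

definition is_norm_on_BH :: "(('a::complex_inner \<Rightarrow> 'a) \<Rightarrow> real) \<Rightarrow> bool" where
  "is_norm_on_BH N \<longleftrightarrow>
     (\<forall>A. bounded_op A \<longrightarrow> 0 \<le> N A) \<and>
     (\<forall>A. bounded_op A \<longrightarrow> (N A = 0 \<longleftrightarrow> A = (\<lambda>x. 0))) \<and>
     (\<forall>A B. bounded_op A \<longrightarrow> bounded_op B \<longrightarrow> N (\<lambda>x. A x + B x) \<le> N A + N B) \<and>
     (\<forall>c A. bounded_op A \<longrightarrow> N (\<lambda>x. scaleC c (A x)) = cmod c * N A)"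

definition wN :: "(('a::complex_inner \<Rightarrow> 'a) \<Rightarrow> real) \<Rightarrow> ('a \<Rightarrow> 'a) \<Rightarrow> real" where
  "wN N T = (SUP \<theta>::real. N (re_op (\<lambda>x. scaleC (exp (\<i> * complex_of_real \<theta>)) (T x))))"

end

theory Submission
  imports Defs
begin

text \<open>With \<open>A = T + T\<^sup>*\<close> self-adjoint and \<open>B = T - T\<^sup>*\<close> skew-adjoint one has
\<open>\<Re>(e\<^sup>i\<^sup>\<theta> T) = (cos \<theta> A + i sin \<theta> B)/2\<close>, \<open>\<Re>(e\<^sup>i\<^sup>\<theta> A) = cos \<theta> A\<close> and
\<open>\<Re>(e\<^sup>i\<^sup>\<theta> B) = i sin \<theta> B\<close>; hence \<open>w\<^sub>N(A) = N(A)\<close> and \<open>w\<^sub>N(B) = N(B)\<close>.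
Evaluating at \<open>\<theta> = 0, \<pi>/2\<close> gives the lower bound, and the triangle inequality together
with \<open>\<bar>cos \<theta>\<bar> a + \<bar>sin \<theta>\<bar> b \<le> \<surd>(a\<^sup>2 + b\<^sup>2)\<close> gives the upper bound.
Since the adjoint is defined by a description, its existence must be proved first: this is the
Riesz representation theorem, obtained from an element of minimal norm on the closed affine
hyperplane \<open>f = 1\<close>.\<close>

lemma scaleC_zero_left [simp]: "scaleC 0 x = 0"
  using scaleC_of_real[of 0 x] by simp

lemma scaleC_zero_right [simp]: "scaleC a 0 = 0"
  using scaleC_add_right[of a 0 0] by simp

lemma scaleC_minus_right: "scaleC a (- x) = - scaleC a x"
  using scaleC_add_right[of a x "-x"] by (simp add: eq_neg_iff_add_eq_0 add.commute)

lemma scaleC_diff_right: "scaleC a (x - y) = scaleC a x - scaleC a y"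
  using scaleC_add_right[of a x "-y"] by (simp add: scaleC_minus_right)

lemma cinner_zero_right [simp]: "cinner x 0 = 0"
  using cinner_add_right[of x 0 0] by simp

lemma cinner_zero_left [simp]: "cinner 0 x = 0"
  using cinner_conj[of 0 x] by simp

lemma cinner_add_left: "cinner (x + y) z = cinner x z + cinner y z"
  by (metis cinner_conj cinner_add_right complex_cnj_add)

lemma cinner_scaleC_left: "cinner (scaleC c x) y = cnj c * cinner x y"
  by (metis cinner_conj cinner_scaleC_right complex_cnj_mult)

lemma cinner_minus_right: "cinner x (- y) = - cinner x y"
  using cinner_add_right[of x y "-y"] by (simp add: eq_neg_iff_add_eq_0 add.commute)

lemma cinner_minus_left: "cinner (- x) y = - cinner x y"
  using cinner_add_left[of x "-x" y] by (simp add: eq_neg_iff_add_eq_0 add.commute)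

lemma cinner_diff_right: "cinner x (y - z) = cinner x y - cinner x z"
  using cinner_add_right[of x y "-z"] by (simp add: cinner_minus_right)

lemma cinner_diff_left: "cinner (x - y) z = cinner x z - cinner y z"
  using cinner_add_left[of x "-y" z] by (simp add: cinner_minus_left)

lemma cinner_scaleR_right: "cinner x (r *\<^sub>R y) = of_real r * cinner x y"
  by (metis cinner_scaleC_right scaleC_of_real)

lemma cinner_scaleR_left: "cinner (r *\<^sub>R x) y = of_real r * cinner x y"
  by (metis cinner_scaleC_left scaleC_of_real complex_cnj_complex_of_real)

lemma norm_scaleC: "norm (scaleC c x) = cmod c * norm x"
proof -
  have "complex_of_real ((norm (scaleC c x))\<^sup>2) = cnj c * c * complex_of_real ((norm x)\<^sup>2)"
    by (metis cinner_self_norm cinner_scaleC_left cinner_scaleC_right mult.assoc)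
  also have "cnj c * c = complex_of_real ((cmod c)\<^sup>2)"
    by (metis complex_norm_square mult.commute of_real_power)
  finally have "(norm (scaleC c x))\<^sup>2 = (cmod c * norm x)\<^sup>2"
    by (metis of_real_mult of_real_eq_iff power_mult_distrib)
  then show ?thesis
    by (simp add: power2_eq_iff_nonneg)
qed

lemma cinner_ext: "(\<And>z. cinner z x = cinner z y) \<Longrightarrow> x = y"
  using cinner_self_norm[of "x - y"] by (simp add: cinner_diff_right)

lemma power2_norm_diff: "(norm (x - y))\<^sup>2 = (norm x)\<^sup>2 + (norm y)\<^sup>2 - 2 * Re (cinner x y)"
proof -
  have "cinner (x - y) (x - y) = cinner x x - cinner x y - cinner y x + cinner y y"
    by (simp add: cinner_diff_left cinner_diff_right)
  then have "complex_of_real ((norm (x - y))\<^sup>2) = cinner x x - cinner x y - cinner y x + cinner y y"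
    by (simp only: cinner_self_norm)
  then have "(norm (x - y))\<^sup>2 = Re (cinner x x - cinner x y - cinner y x + cinner y y)"
    by (metis Re_complex_of_real)
  also have "\<dots> = (norm x)\<^sup>2 + (norm y)\<^sup>2 - 2 * Re (cinner x y)"
    using cinner_conj[of y x] by (simp add: cinner_self_norm del: of_real_power)
  finally show ?thesis .
qed

lemma power2_norm_add: "(norm (x + y))\<^sup>2 = (norm x)\<^sup>2 + (norm y)\<^sup>2 + 2 * Re (cinner x y)"
  using power2_norm_diff[of x "-y"] by (simp add: cinner_minus_right)

lemma Re_cinner_le_norm: "Re (cinner x y) \<le> norm x * norm y"
proof (cases "x = 0 \<or> y = 0")
  case True then show ?thesis by auto
next
  case False
  have "0 \<le> (norm (norm y *\<^sub>R x - norm x *\<^sub>R y))\<^sup>2" by simp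
  also have "\<dots> = 2 * (norm x)\<^sup>2 * (norm y)\<^sup>2 - 2 * (norm x * norm y) * Re (cinner x y)"
    by (simp add: power2_norm_diff cinner_scaleR_left cinner_scaleR_right power_mult_distrib algebra_simps)
  finally have "(norm x * norm y) * Re (cinner x y) \<le> (norm x * norm y) * (norm x * norm y)"
    by (simp add: power2_eq_square algebra_simps)
  then show ?thesis using False by simp
qed

lemma norm_cinner_le_norm: "cmod (cinner x y) \<le> norm x * norm y"
proof (cases "cinner x y = 0")
  case True then show ?thesis by simp
next
  case False
  define p where "p = cinner x y"
  define c where "c = cnj p / complex_of_real (cmod p)"
  have "p * cnj p = complex_of_real (cmod p) * complex_of_real (cmod p)"
    by (metis complex_norm_square mult.commute of_real_power power2_eq_square)
  then have "c * p = complex_of_real (cmod p)"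
    using False unfolding c_def p_def by (simp add: field_simps)
  then have "cmod p = Re (cinner x (scaleC c y))" by (simp add: cinner_scaleC_right p_def)
  also have "\<dots> \<le> norm x * norm (scaleC c y)" by (rule Re_cinner_le_norm)
  also have "\<dots> = norm x * norm y" using False by (simp add: norm_scaleC c_def p_def norm_divide)
  finally show ?thesis by (simp add: p_def)
qed

lemma Cauchy_if_dist_power2_le:
  fixes xs :: "nat \<Rightarrow> 'a::metric_space"
  assumes dist: "\<And>m n. (dist (xs m) (xs n))\<^sup>2 \<le> r m + r n" and r: "r \<longlonglongrightarrow> 0"
  shows "Cauchy xs"
proof (rule metric_CauchyI)
  fix e :: real assume "0 < e"
  then have "\<forall>\<^sub>F n in sequentially. r n < e\<^sup>2 / 2" using r by (intro order_tendstoD(2)) auto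
  then obtain M where M: "\<And>n. n \<ge> M \<Longrightarrow> r n < e\<^sup>2 / 2" by (auto simp: eventually_sequentially)
  have "dist (xs m) (xs n) < e" if "m \<ge> M" "n \<ge> M" for m n
  proof -
    have "(dist (xs m) (xs n))\<^sup>2 < e\<^sup>2" using dist[of m n] M[OF that(1)] M[OF that(2)] by linarith
    then show ?thesis using \<open>0 < e\<close> by (simp add: power_less_imp_less_base)
  qed
  then show "\<exists>M. \<forall>m\<ge>M. \<forall>n\<ge>M. dist (xs m) (xs n) < e" by blast
qed

lemma dist_power2_le_if_norm_midpoint_ge:
  fixes x y :: "'a::complex_inner"
  assumes "d \<le> norm ((1/2) *\<^sub>R (x + y))" and "0 \<le> d"
  shows "(dist x y)\<^sup>2 \<le> 2 * (norm x)\<^sup>2 + 2 * (norm y)\<^sup>2 - 4 * d\<^sup>2"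
proof -
  have "2 * d \<le> norm (x + y)" using assms(1) by simp
  then have "4 * d\<^sup>2 \<le> (norm (x + y))\<^sup>2"
    using assms(2) power_mono[of "2 * d" "norm (x + y)" 2] by (simp add: power_mult_distrib)
  moreover have "(dist x y)\<^sup>2 + (norm (x + y))\<^sup>2 = 2 * (norm x)\<^sup>2 + 2 * (norm y)\<^sup>2"
    using power2_norm_add[of x y] power2_norm_diff[of x y] by (simp add: dist_norm)
  ultimately show ?thesis by linarith
qed

lemma closed_midpoint_convex_has_min_norm:
  fixes C :: "'a::complex_hilbert set"
  assumes "C \<noteq> {}" "closed C" and midpoint: "\<And>x y. x \<in> C \<Longrightarrow> y \<in> C \<Longrightarrow> (1/2) *\<^sub>R (x + y) \<in> C"
  shows "\<exists>u\<in>C. \<forall>w\<in>C. norm u \<le> norm w"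
proof -
  define d where "d = Inf (norm ` C)"
  have bdd: "bdd_below (norm ` C)" by (rule bdd_belowI[of _ 0]) auto
  have d_le: "d \<le> norm w" if "w \<in> C" for w
    unfolding d_def using bdd that by (simp add: cInf_lower)
  have "0 \<le> d"
    unfolding d_def using assms(1) by (intro cInf_greatest) auto
  have "\<exists>x\<in>C. (norm x)\<^sup>2 < d\<^sup>2 + inverse (real (Suc n))" for n
  proof -
    define s where "s = sqrt (d\<^sup>2 + inverse (real (Suc n)))"
    have "d < s" unfolding s_def by (rule real_less_rsqrt) simp
    then obtain x where "x \<in> C" "norm x < s"
      using cInf_less_iff[of "norm ` C" s] assms(1) bdd by (auto simp: d_def)
    then have "(norm x)\<^sup>2 < s\<^sup>2" by (simp add: power_strict_mono)
    also have "s\<^sup>2 = d\<^sup>2 + inverse (real (Suc n))"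
      unfolding s_def by (simp add: add_nonneg_nonneg)
    finally show ?thesis using \<open>x \<in> C\<close> by blast
  qed
  then obtain xs where xs: "\<And>n. xs n \<in> C" "\<And>n. (norm (xs n))\<^sup>2 < d\<^sup>2 + inverse (real (Suc n))"
    by metis
  have dist: "(dist (xs m) (xs n))\<^sup>2 \<le> 2 * inverse (real (Suc m)) + 2 * inverse (real (Suc n))" for m n
    using dist_power2_le_if_norm_midpoint_ge[OF d_le[OF midpoint[OF xs(1)[of m] xs(1)[of n]]] \<open>0 \<le> d\<close>]
      xs(2)[of m] xs(2)[of n] by linarith
  have "(\<lambda>n. 2 * inverse (real (Suc n))) \<longlonglongrightarrow> 0"
    using tendsto_mult_right_zero[OF LIMSEQ_inverse_real_of_nat] by simp
  then have "Cauchy xs" by (rule Cauchy_if_dist_power2_le[OF dist])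
  then obtain u where u: "xs \<longlonglongrightarrow> u" using Cauchy_convergent_iff convergent_def by blast
  have "u \<in> C" using closed_sequentially[OF assms(2) xs(1) u] .
  have "(\<lambda>n. (norm (xs n))\<^sup>2) \<longlonglongrightarrow> (norm u)\<^sup>2" by (intro tendsto_power tendsto_norm u)
  moreover have "(\<lambda>n. d\<^sup>2 + inverse (real (Suc n))) \<longlonglongrightarrow> d\<^sup>2 + 0"
    by (intro tendsto_add tendsto_const LIMSEQ_inverse_real_of_nat)
  moreover have "\<exists>N. \<forall>n\<ge>N. (norm (xs n))\<^sup>2 \<le> d\<^sup>2 + inverse (real (Suc n))"
    using xs(2) less_imp_le by blast
  ultimately have "(norm u)\<^sup>2 \<le> d\<^sup>2 + 0" by (rule LIMSEQ_le)
  then have "(norm u)\<^sup>2 \<le> d\<^sup>2" by simp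
  then have "norm u \<le> d" using \<open>0 \<le> d\<close> by (rule power2_le_imp_le)
  then show ?thesis using \<open>u \<in> C\<close> d_le order_trans by blast
qed

lemma cinner_eq_0_if_norm_le_on_line:
  assumes "\<And>t. norm u \<le> norm (u + scaleC t k)"
  shows "cinner u k = 0"
proof (cases "k = 0")
  case True then show ?thesis by simp
next
  case False
  define p where "p = cinner u k"
  define t where "t = - cnj p / complex_of_real ((norm k)\<^sup>2)"
  have "(norm (u + scaleC t k))\<^sup>2 = (norm u)\<^sup>2 + (cmod t * norm k)\<^sup>2 + 2 * Re (t * p)"
    by (simp add: power2_norm_add norm_scaleC cinner_scaleC_right p_def)
  also have "cmod t = cmod p / (norm k)\<^sup>2"
    by (simp add: t_def norm_divide norm_power)
  also have "(cmod p / (norm k)\<^sup>2 * norm k)\<^sup>2 = (cmod p)\<^sup>2 / (norm k)\<^sup>2"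
    using False by (simp add: power2_eq_square)
  also have "Re (t * p) = - (cmod p)\<^sup>2 / (norm k)\<^sup>2"
    by (simp add: t_def cmod_power2 diff_divide_distrib add_divide_distrib flip: power2_eq_square)
  finally have "(norm (u + scaleC t k))\<^sup>2 = (norm u)\<^sup>2 - (cmod p)\<^sup>2 / (norm k)\<^sup>2" by simp
  moreover have "(norm u)\<^sup>2 \<le> (norm (u + scaleC t k))\<^sup>2" using assms[of t] by (rule power_mono) simp
  ultimately have "(cmod p)\<^sup>2 / (norm k)\<^sup>2 \<le> 0" by simp
  then show ?thesis using False by (simp add: p_def divide_le_0_iff)
qed

lemma riesz_representation:
  fixes f :: "'a::complex_hilbert \<Rightarrow> complex"
  assumes add: "\<And>x y. f (x + y) = f x + f y"
    and scale: "\<And>c x. f (scaleC c x) = c * f x"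
    and bound: "\<And>x. cmod (f x) \<le> K * norm x"
  shows "\<exists>z. \<forall>x. f x = cinner z x"
proof (cases "\<forall>x. f x = 0")
  case True then show ?thesis by (intro exI[of _ 0]) simp
next
  case False
  then obtain x0 where "f x0 \<noteq> 0" by auto
  have "bounded_linear f"
  proof (rule bounded_linear_intro[where K=K])
    show "f (r *\<^sub>R x) = r *\<^sub>R f x" for r x
      using scale[of "complex_of_real r" x] by (simp add: scaleC_of_real scaleR_conv_of_real)
    show "norm (f x) \<le> norm x * K" for x using bound[of x] by (simp add: mult.commute)
  qed (rule add)
  define C where "C = f -` {1}"
  have "closed C"
    unfolding C_def by (intro closed_vimage closed_singleton linear_continuous_on) fact
  moreover have "scaleC (1 / f x0) x0 \<in> C" using \<open>f x0 \<noteq> 0\<close> by (simp add: C_def scale)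
  moreover have "(1/2) *\<^sub>R (x + y) \<in> C" if "x \<in> C" "y \<in> C" for x y
    using that scale[of "complex_of_real (1/2)" "x + y"] scaleC_of_real[of "1/2" "x + y"]
    by (simp add: C_def add)
  ultimately obtain u where "u \<in> C" and u_min: "\<forall>w\<in>C. norm u \<le> norm w"
    using closed_midpoint_convex_has_min_norm[of C] by blast
  have "f u = 1" using \<open>u \<in> C\<close> by (simp add: C_def)
  have orth: "cinner u k = 0" if "f k = 0" for k
  proof (rule cinner_eq_0_if_norm_le_on_line)
    show "norm u \<le> norm (u + scaleC t k)" for t
      using u_min \<open>f u = 1\<close> that by (simp add: C_def add scale)
  qed
  have "u \<noteq> 0" using \<open>f u = 1\<close> scale[of 0 0] by auto
  \<comment> \<open>Every \<open>x\<close> splits as \<open>f x \<cdot> u\<close> plus an element of the kernel of \<open>f\<close>.\<close>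
  have "f x = cinner (scaleC (1 / (norm u)\<^sup>2) u) x" for x
  proof -
    have "f (x - scaleC (f x) u) = 0"
      using add[of "x - scaleC (f x) u" "scaleC (f x) u"] by (simp add: scale \<open>f u = 1\<close>)
    then have "cinner u (x - scaleC (f x) u) = 0" by (rule orth)
    then have "cinner u x = f x * complex_of_real ((norm u)\<^sup>2)"
      by (simp add: cinner_diff_right cinner_scaleC_right cinner_self_norm)
    then show ?thesis using \<open>u \<noteq> 0\<close> by (simp add: cinner_scaleC_left field_simps)
  qed
  then show ?thesis by blast
qed

lemma bounded_opI:
  fixes T :: "'a::complex_inner \<Rightarrow> 'a"
  assumes "\<And>x y. T (x + y) = T x + T y" "\<And>c x. T (scaleC c x) = scaleC c (T x)"
    and "\<And>x. norm (T x) \<le> norm x * K"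
  shows "bounded_op T"
  unfolding bounded_op_def
proof (intro conjI allI)
  show "bounded_linear T"
  proof (rule bounded_linear_intro[where K=K])
    show "T (r *\<^sub>R x) = r *\<^sub>R T x" for r x
      using assms(2)[of "complex_of_real r" x] by (simp add: scaleC_of_real)
  qed (use assms in auto)
qed (use assms in auto)

lemma bounded_opD:
  assumes "bounded_op T"
  shows "T (x + y) = T x + T y" "T (scaleC c x) = scaleC c (T x)" "\<exists>K. \<forall>x. norm (T x) \<le> norm x * K"
  using assms unfolding bounded_op_def
  by (auto simp: linear_simps dest: bounded_linear.bounded)

lemma bounded_op_add: "bounded_op A \<Longrightarrow> bounded_op B \<Longrightarrow> bounded_op (\<lambda>x. A x + B x)"
  unfolding bounded_op_def by (auto intro: bounded_linear_add simp: scaleC_add_right)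

lemma bounded_op_diff: "bounded_op A \<Longrightarrow> bounded_op B \<Longrightarrow> bounded_op (\<lambda>x. A x - B x)"
  unfolding bounded_op_def by (auto intro: bounded_linear_sub simp: scaleC_diff_right)

lemma bounded_op_scaleC:
  fixes A :: "'a::complex_inner \<Rightarrow> 'a"
  assumes "bounded_op A"
  shows "bounded_op (\<lambda>x. scaleC c (A x))"
proof -
  obtain K where K: "\<And>x. norm (A x) \<le> norm x * K" using bounded_opD(3)[OF assms] by blast
  show ?thesis
  proof (rule bounded_opI[where K="cmod c * K"])
    show "scaleC c (A (x + y)) = scaleC c (A x) + scaleC c (A y)" for x y
      by (simp add: bounded_opD(1)[OF assms] scaleC_add_right)
    show "scaleC c (A (scaleC d x)) = scaleC d (scaleC c (A x))" for d x
      by (simp add: bounded_opD(2)[OF assms] scaleC_scaleC mult.commute)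
    show "norm (scaleC c (A x)) \<le> norm x * (cmod c * K)" for x
      using mult_left_mono[OF K[of x] norm_ge_zero[of c]] by (simp add: norm_scaleC algebra_simps)
  qed
qed

lemma adj_eqI:
  assumes "\<And>x y. cinner (T x) y = cinner x (S y)"
  shows "adj T = S"
  unfolding adj_def
proof (rule the_equality)
  show "\<forall>x y. cinner (T x) y = cinner x (S y)" using assms by auto
  fix S' assume S': "\<forall>x y. cinner (T x) y = cinner x (S' y)"
  have "cinner z (S' y) = cinner z (S y)" for z y
    using S' assms by metis
  then show "S' = S" by (intro ext) (rule cinner_ext)
qed

lemma ex_adjoint:
  fixes T :: "'a::complex_hilbert \<Rightarrow> 'a"
  assumes T: "bounded_op T"
  shows "\<exists>S. \<forall>x y. cinner (T x) y = cinner x (S y)"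
proof -
  obtain K where K: "\<And>x. norm (T x) \<le> norm x * K" using bounded_opD(3)[OF T] by blast
  have "\<exists>z. \<forall>x. cinner (T x) y = cinner x z" for y
  proof -
    have "\<exists>z. \<forall>x. cinner y (T x) = cinner z x"
    proof (rule riesz_representation[where K="norm y * K"])
      show "cinner y (T (x + x')) = cinner y (T x) + cinner y (T x')" for x x'
        by (simp add: bounded_opD(1)[OF T] cinner_add_right)
      show "cinner y (T (scaleC c x)) = c * cinner y (T x)" for c x
        by (simp add: bounded_opD(2)[OF T] cinner_scaleC_right)
      show "cmod (cinner y (T x)) \<le> norm y * K * norm x" for x
        using norm_cinner_le_norm[of y "T x"] mult_left_mono[OF K[of x] norm_ge_zero[of y]]
        by (simp add: algebra_simps)
    qed
    then obtain z where "\<forall>x. cinner y (T x) = cinner z x" by blast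
    then have "\<forall>x. cinner (T x) y = cinner x z"
      using cinner_conj[of "T _" y] cinner_conj[of _ z] by simp
    then show ?thesis by blast
  qed
  then have "\<forall>y. \<exists>z. \<forall>x. cinner (T x) y = cinner x z" by blast
  from choice[OF this] show ?thesis by blast
qed

lemma cinner_adj_right:
  fixes T :: "'a::complex_hilbert \<Rightarrow> 'a"
  assumes "bounded_op T"
  shows "cinner (T x) y = cinner x (adj T y)"
proof -
  obtain S where S: "\<forall>x y. cinner (T x) y = cinner x (S y)" using ex_adjoint[OF assms] by blast
  then have "adj T = S" by (intro adj_eqI) auto
  with S show ?thesis by simp
qed

lemma cinner_adj_left:
  fixes T :: "'a::complex_hilbert \<Rightarrow> 'a"
  assumes "bounded_op T"
  shows "cinner (adj T x) y = cinner x (T y)"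
  using cinner_conj[of "adj T x" y] cinner_conj[of x "T y"] cinner_adj_right[OF assms, of y x] by simp

lemma bounded_op_adj:
  fixes T :: "'a::complex_hilbert \<Rightarrow> 'a"
  assumes T: "bounded_op T"
  shows "bounded_op (adj T)"
proof -
  obtain K0 where "\<And>x. norm (T x) \<le> norm x * K0" using bounded_opD(3)[OF T] by blast
  then have K: "norm (T x) \<le> norm x * max K0 0" for x
    by (meson max.cobounded1 mult_left_mono norm_ge_zero order_trans)
  show ?thesis
  proof (rule bounded_opI[where K="max K0 0"])
    show "adj T (x + y) = adj T x + adj T y" for x y
      by (rule cinner_ext) (simp add: cinner_adj_right[OF T, symmetric] cinner_add_right)
    show "adj T (scaleC c x) = scaleC c (adj T x)" for c x
      by (rule cinner_ext) (simp add: cinner_adj_right[OF T, symmetric] cinner_scaleC_right)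
    show "norm (adj T y) \<le> norm y * max K0 0" for y
    proof -
      let ?s = "adj T y"
      have "norm ?s * norm ?s = Re (cinner (T ?s) y)"
        by (simp add: cinner_adj_right[OF T] cinner_self_norm power2_eq_square)
      also have "\<dots> \<le> norm (T ?s) * norm y" by (rule Re_cinner_le_norm)
      also have "\<dots> \<le> norm ?s * (norm y * max K0 0)"
        using mult_right_mono[OF K[of ?s] norm_ge_zero[of y]] by (simp add: algebra_simps)
      finally show ?thesis
        by (cases "?s = 0") (simp_all add: mult_le_cancel_left_pos)
    qed
  qed
qed

lemma adj_scaleC:
  fixes T :: "'a::complex_hilbert \<Rightarrow> 'a"
  assumes "bounded_op T"
  shows "adj (\<lambda>x. scaleC c (T x)) = (\<lambda>y. scaleC (cnj c) (adj T y))"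
  by (rule adj_eqI) (simp add: cinner_scaleC_left cinner_scaleC_right cinner_adj_right[OF assms])

lemma adj_add_adj_self:
  fixes T :: "'a::complex_hilbert \<Rightarrow> 'a"
  assumes "bounded_op T"
  shows "adj (\<lambda>x. T x + adj T x) = (\<lambda>x. T x + adj T x)"
  by (rule adj_eqI)
    (simp add: cinner_add_left cinner_add_right cinner_adj_right[OF assms] cinner_adj_left[OF assms])

lemma adj_diff_adj_self:
  fixes T :: "'a::complex_hilbert \<Rightarrow> 'a"
  assumes "bounded_op T"
  shows "adj (\<lambda>x. T x - adj T x) = (\<lambda>x. - (T x - adj T x))"
  by (rule adj_eqI)
    (simp add: cinner_diff_left cinner_diff_right cinner_minus_right
      cinner_adj_right[OF assms] cinner_adj_left[OF assms])

lemma is_norm_on_BH_nonneg: "is_norm_on_BH N \<Longrightarrow> bounded_op A \<Longrightarrow> 0 \<le> N A"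
  unfolding is_norm_on_BH_def by blast

lemma is_norm_on_BH_triangle:
  "is_norm_on_BH N \<Longrightarrow> bounded_op A \<Longrightarrow> bounded_op B \<Longrightarrow> N (\<lambda>x. A x + B x) \<le> N A + N B"
  unfolding is_norm_on_BH_def by blast

lemma is_norm_on_BH_scaleC:
  "is_norm_on_BH N \<Longrightarrow> bounded_op A \<Longrightarrow> N (\<lambda>x. scaleC c (A x)) = cmod c * N A"
  unfolding is_norm_on_BH_def by blast

lemma exp_i_times_of_real: "exp (\<i> * complex_of_real t) = complex_of_real (cos t) + \<i> * complex_of_real (sin t)"
  by (simp add: complex_eq_iff Re_exp Im_exp)

lemma re_op_scaleC:
  fixes T :: "'a::complex_hilbert \<Rightarrow> 'a"
  assumes "bounded_op T"
  shows "re_op (\<lambda>x. scaleC c (T x)) = (\<lambda>x. scaleC (1/2) (scaleC c (T x) + scaleC (cnj c) (adj T x)))"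
  by (simp add: re_op_def adj_scaleC[OF assms])

lemma re_op_exp_scaleC:
  fixes T :: "'a::complex_hilbert \<Rightarrow> 'a"
  assumes "bounded_op T"
  shows "re_op (\<lambda>x. scaleC (exp (\<i> * complex_of_real t)) (T x))
    = (\<lambda>x. scaleC (1/2) (scaleC (complex_of_real (cos t)) (T x + adj T x)
                          + scaleC (\<i> * complex_of_real (sin t)) (T x - adj T x)))"
  unfolding re_op_scaleC[OF assms]
  by (intro ext, rule cinner_ext)
    (simp add: cinner_add_right cinner_diff_right cinner_scaleC_right exp_i_times_of_real algebra_simps)

lemma cSUP_eq_attained:
  fixes g :: "'b \<Rightarrow> 'a::conditionally_complete_lattice"
  assumes "\<And>t. g t \<le> M" and "g u = M"
  shows "(SUP t. g t) = M"
  using assms by (intro cSup_eq_maximum) auto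

lemma wN_self_adjoint:
  fixes A :: "'a::complex_hilbert \<Rightarrow> 'a"
  assumes N: "is_norm_on_BH N" and A: "bounded_op A" and "adj A = A"
  shows "wN N A = N A"
proof -
  have re: "re_op (\<lambda>x. scaleC (exp (\<i> * complex_of_real t)) (A x)) = (\<lambda>x. scaleC (complex_of_real (cos t)) (A x))" for t
    unfolding re_op_scaleC[OF A] \<open>adj A = A\<close>
    by (intro ext, rule cinner_ext) (simp add: cinner_add_right cinner_scaleC_right exp_i_times_of_real algebra_simps)
  show ?thesis
    unfolding wN_def re
  proof (rule cSUP_eq_attained[where u=0])
    show "N (\<lambda>x. scaleC (complex_of_real (cos t)) (A x)) \<le> N A" for t
      using is_norm_on_BH_nonneg[OF N A] abs_cos_le_one[of t]
      by (simp add: is_norm_on_BH_scaleC[OF N A] mult_left_le_one_le)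
  qed (use is_norm_on_BH_scaleC[OF N A, of 1] in \<open>simp add: scaleC_one\<close>)
qed

lemma wN_skew_adjoint:
  fixes B :: "'a::complex_hilbert \<Rightarrow> 'a"
  assumes N: "is_norm_on_BH N" and B: "bounded_op B" and "adj B = (\<lambda>x. - B x)"
  shows "wN N B = N B"
proof -
  have re: "re_op (\<lambda>x. scaleC (exp (\<i> * complex_of_real t)) (B x)) = (\<lambda>x. scaleC (\<i> * complex_of_real (sin t)) (B x))" for t
    unfolding re_op_scaleC[OF B] \<open>adj B = (\<lambda>x. - B x)\<close>
    by (intro ext, rule cinner_ext)
      (simp add: cinner_add_right cinner_scaleC_right cinner_minus_right exp_i_times_of_real algebra_simps)
  show ?thesis
    unfolding wN_def re
  proof (rule cSUP_eq_attained[where u="pi/2"])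
    show "N (\<lambda>x. scaleC (\<i> * complex_of_real (sin t)) (B x)) \<le> N B" for t
      using is_norm_on_BH_nonneg[OF N B] abs_sin_le_one[of t]
      by (simp add: is_norm_on_BH_scaleC[OF N B] norm_mult mult_left_le_one_le)
  qed (use is_norm_on_BH_scaleC[OF N B, of \<i>] in simp)
qed

lemma abs_cos_mult_add_abs_sin_mult_le: "\<bar>cos t\<bar> * a + \<bar>sin t\<bar> * b \<le> sqrt (a\<^sup>2 + b\<^sup>2)"
proof (rule real_le_rsqrt)
  \<comment> \<open>Lagrange's identity, with \<open>\<bar>cos t\<bar>\<^sup>2 + \<bar>sin t\<bar>\<^sup>2 = 1\<close>.\<close>
  have "(x * a + y * b)\<^sup>2 + (x * b - y * a)\<^sup>2 = (x\<^sup>2 + y\<^sup>2) * (a\<^sup>2 + b\<^sup>2)" for x y :: real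
    by (simp add: power2_eq_square algebra_simps)
  from this[of "\<bar>cos t\<bar>" "\<bar>sin t\<bar>"]
  have "(\<bar>cos t\<bar> * a + \<bar>sin t\<bar> * b)\<^sup>2 + (\<bar>cos t\<bar> * b - \<bar>sin t\<bar> * a)\<^sup>2 = a\<^sup>2 + b\<^sup>2"
    by simp
  then show "(\<bar>cos t\<bar> * a + \<bar>sin t\<bar> * b)\<^sup>2 \<le> a\<^sup>2 + b\<^sup>2"
    using zero_le_power2[of "\<bar>cos t\<bar> * b - \<bar>sin t\<bar> * a"] by linarith
qed

lemma SUP_norm_cos_sin_combination_bounds:
  fixes A B :: "'a::complex_hilbert \<Rightarrow> 'a"
  assumes N: "is_norm_on_BH N" and A: "bounded_op A" and B: "bounded_op B"
  defines "g \<equiv> \<lambda>t::real. N (\<lambda>x. scaleC (1/2) (scaleC (complex_of_real (cos t)) (A x)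
                                              + scaleC (\<i> * complex_of_real (sin t)) (B x)))"
  shows "1/2 * max (N A) (N B) \<le> (SUP t. g t)"
    and "(SUP t. g t) \<le> 1/2 * sqrt ((N A)\<^sup>2 + (N B)\<^sup>2)"
proof -
  have A': "bounded_op (\<lambda>x. scaleC c (A x))" and B': "bounded_op (\<lambda>x. scaleC c (B x))" for c
    using bounded_op_scaleC A B by blast+
  have g: "g t = 1/2 * N (\<lambda>x. scaleC (complex_of_real (cos t)) (A x) + scaleC (\<i> * complex_of_real (sin t)) (B x))" for t
    using is_norm_on_BH_scaleC[OF N bounded_op_add[OF A' B'], of "1/2"] by (simp add: g_def)
  have g_le: "g t \<le> 1/2 * sqrt ((N A)\<^sup>2 + (N B)\<^sup>2)" for t
  proof -
    have "N (\<lambda>x. scaleC (complex_of_real (cos t)) (A x) + scaleC (\<i> * complex_of_real (sin t)) (B x))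
        \<le> \<bar>cos t\<bar> * N A + \<bar>sin t\<bar> * N B"
      using is_norm_on_BH_triangle[OF N A'[of "complex_of_real (cos t)"] B'[of "\<i> * complex_of_real (sin t)"]]
      by (simp add: is_norm_on_BH_scaleC[OF N A] is_norm_on_BH_scaleC[OF N B] norm_mult)
    also have "\<dots> \<le> sqrt ((N A)\<^sup>2 + (N B)\<^sup>2)" by (rule abs_cos_mult_add_abs_sin_mult_le)
    finally show ?thesis by (simp add: g)
  qed
  then have "bdd_above (range g)" by (intro bdd_aboveI2)
  have "g 0 = 1/2 * N A" using g[of 0] by (simp add: scaleC_one)
  moreover have "g (pi/2) = 1/2 * N B" using g[of "pi/2"] is_norm_on_BH_scaleC[OF N B, of \<i>] by simp
  ultimately show "1/2 * max (N A) (N B) \<le> (SUP t. g t)"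
    using cSUP_upper[OF _ \<open>bdd_above (range g)\<close>, of 0] cSUP_upper[OF _ \<open>bdd_above (range g)\<close>, of "pi/2"]
    by (simp add: max_def)
  show "(SUP t. g t) \<le> 1/2 * sqrt ((N A)\<^sup>2 + (N B)\<^sup>2)" by (intro cSUP_least g_le) simp
qed

theorem corollary2p9:
  fixes T :: "'a::complex_hilbert \<Rightarrow> 'a"
    and N :: "('a \<Rightarrow> 'a) \<Rightarrow> real"
  assumes "is_norm_on_BH N"
    and "bounded_op T"
  shows "1/2 * max (wN N (\<lambda>x. T x + adj T x)) (wN N (\<lambda>x. T x - adj T x)) \<le> wN N T
       \<and> wN N T \<le> 1/2 * sqrt ((wN N (\<lambda>x. T x + adj T x))\<^sup>2 + (wN N (\<lambda>x. T x - adj T x))\<^sup>2)"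
proof -
  note N = assms(1) and T = assms(2)
  have sum: "bounded_op (\<lambda>x. T x + adj T x)" and diff: "bounded_op (\<lambda>x. T x - adj T x)"
    using bounded_op_add bounded_op_diff T bounded_op_adj[OF T] by blast+
  have "wN N (\<lambda>x. T x + adj T x) = N (\<lambda>x. T x + adj T x)"
    by (rule wN_self_adjoint[OF N sum adj_add_adj_self[OF T]])
  moreover have "wN N (\<lambda>x. T x - adj T x) = N (\<lambda>x. T x - adj T x)"
    by (rule wN_skew_adjoint[OF N diff adj_diff_adj_self[OF T]])
  moreover note SUP_norm_cos_sin_combination_bounds[OF N sum diff]
  ultimately show ?thesis
    unfolding wN_def re_op_exp_scaleC[OF T] by simp
qed

end
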